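(* The eventual age detector $\diamond\mathit{AGE}$ is strictly weaker than the perfect age detector $\mathit{AGE}$: $\diamond\mathit{AGE} \prec \mathit{AGE}$.
   Context: Setting: peers in a purely asynchronous message-passing system; a network split (at most one per computation) divides the network into two nonempty partitions; blocks are mined and broadcast by a blockchain algorithm $\mathit{ALG}$. A detector is an algorithm whose actions may use information outside the model; for each peer and each block it has an input variable $in$ and an output variable $out$, initially $\bot$, written/read by $\mathit{ALG}$; detector and $\mathit{ALG}$ actions interleave fairly. Perfect $\mathit{AGE}$: if a suffix of the computation has $in=b$, then $out=\bot$ on a prefix followed by a suffix where $out$ is permanently $old$ if $b$ was mined before the split and $new$ if after (no mistakes, no changes of decision). $\diamond\mathit{AGE}$: may make finitely many mistakes; if a suffix has $in=b$, then the computation has a suffix in which $out$ is permanently the correct value ($old$ for pre-split blocks, $new$ for post-split blocks). Detector $A$ is weaker than detector $B$ if there is an algorithm that takes every computation of $A$ and produces a computation of $B$. $A \equiv B$ if each is weaker than the other; $A \prec B$ if $A$ is weaker than $B$ but $A \not\equiv B$. *)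

theory Defs
  imports Main
begin

text \<open>Age of a block: mined before the network split (Old) or after it (New).\<close>
datatype age = Old | New

text \<open>Histories over discrete (fairly interleaved) steps, per peer 'p and block 'b.
  inp i p b: at step i the input variable of peer p (for block b) is set to b
  (False means bottom).  out i p b: the output variable (None means bottom).\<close>
type_synonym ('p, 'b) in_hist = "nat \<Rightarrow> 'p \<Rightarrow> 'b \<Rightarrow> bool"
type_synonym ('p, 'b) out_hist = "nat \<Rightarrow> 'p \<Rightarrow> 'b \<Rightarrow> age option"

text \<open>A detector specification: given the true ages of blocks and the input
  history, the set of admissible output histories.\<close>
type_synonym ('p, 'b) detector = "('b \<Rightarrow> age) \<Rightarrow> ('p, 'b) in_hist \<Rightarrow> ('p, 'b) out_hist \<Rightarrow> bool"

definition input_suffix :: "('p, 'b) in_hist \<Rightarrow> 'p \<Rightarrow> 'b \<Rightarrow> bool" where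
  "input_suffix inp p b \<longleftrightarrow> (\<exists>k. \<forall>i\<ge>k. inp i p b)"

definition AGE :: "('p, 'b) detector" where
  "AGE truth inp out \<longleftrightarrow>
     (\<forall>p b. input_suffix inp p b \<longrightarrow>
        (\<exists>k. (\<forall>i<k. out i p b = None) \<and> (\<forall>i\<ge>k. out i p b = Some (truth b))))"

definition EvAGE :: "('p, 'b) detector" where
  "EvAGE truth inp out \<longleftrightarrow>
     (\<forall>p b. input_suffix inp p b \<longrightarrow> (\<exists>k. \<forall>i\<ge>k. out i p b = Some (truth b)))"

text \<open>A transformation algorithm (inside the model): it sees the inputs and the
  source detector's outputs, but not the true ages; it is causal (output up to
  step n depends only on the history up to step n).\<close>
definition causal :: "(('p, 'b) in_hist \<Rightarrow> ('p, 'b) out_hist \<Rightarrow> ('p, 'b) out_hist) \<Rightarrow> bool" where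
  "causal T \<longleftrightarrow> (\<forall>inp1 inp2 o1 o2 n.
      (\<forall>i\<le>n. inp1 i = inp2 i \<and> o1 i = o2 i) \<longrightarrow> (\<forall>i\<le>n. T inp1 o1 i = T inp2 o2 i))"

definition weaker :: "('p, 'b) detector \<Rightarrow> ('p, 'b) detector \<Rightarrow> bool" where
  "weaker A B \<longleftrightarrow> (\<exists>T. causal T \<and>
      (\<forall>truth inp out. B truth inp out \<longrightarrow> A truth inp (T inp out)))"

definition det_equiv :: "('p, 'b) detector \<Rightarrow> ('p, 'b) detector \<Rightarrow> bool" where
  "det_equiv A B \<longleftrightarrow> weaker A B \<and> weaker B A"

definition strictly_weaker :: "('p, 'b) detector \<Rightarrow> ('p, 'b) detector \<Rightarrow> bool" where
  "strictly_weaker A B \<longleftrightarrow> weaker A B \<and> \<not> det_equiv A B"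

end

theory Submission
  imports Defs
begin

text \<open>Every computation of AGE is one of \<open>\<diamond>\<close>AGE, so the identity emulates \<open>\<diamond>\<close>AGE.
  Conversely, suppose an algorithm T emulated AGE from \<open>\<diamond>\<close>AGE. Feed it the constant
  output Old, which is a correct \<open>\<diamond>\<close>AGE computation for pre-split blocks: T must
  eventually answer Old, say at step k. Now let \<open>\<diamond>\<close>AGE answer Old up to step k and
  New afterwards, which is correct for post-split blocks. Up to step k the two
  histories coincide, so by causality T still answers Old at step k, a mistake
  that the perfect detector may never make.\<close>

lemma causal_id: "causal (\<lambda>inp out. out)"
  unfolding causal_def by blast

lemma causal_eq_upto:
  assumes "causal T" and "\<And>i. i \<le> n \<Longrightarrow> o1 i = o2 i"
  shows "T inp o1 n = T inp o2 n"
  using assms unfolding causal_def by blast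

lemma AGE_imp_EvAGE: "AGE truth inp out \<Longrightarrow> EvAGE truth inp out"
  unfolding AGE_def EvAGE_def by blast

lemma AGE_output_correct:
  assumes "AGE truth inp out" and "input_suffix inp p b" and "out i p b = Some v"
  shows "v = truth b"
proof -
  obtain k where "\<forall>i<k. out i p b = None" and "\<forall>i\<ge>k. out i p b = Some (truth b)"
    using assms(1,2) unfolding AGE_def by blast
  with assms(3) show ?thesis
    by (cases "i < k") auto
qed

lemma EvAGE_eventually_constant:
  assumes "\<And>i. i \<ge> k \<Longrightarrow> out i = (\<lambda>_ b. Some (truth b))"
  shows "EvAGE truth inp out"
  unfolding EvAGE_def using assms by (metis (full_types))

lemma EvAGE_weaker_AGE: "weaker EvAGE AGE"
  unfolding weaker_def using causal_id AGE_imp_EvAGE by blast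

lemma AGE_not_weaker_EvAGE: "\<not> weaker (AGE :: ('p, 'b) detector) EvAGE"
proof
  assume "weaker (AGE :: ('p, 'b) detector) EvAGE"
  then obtain T :: "('p, 'b) in_hist \<Rightarrow> ('p, 'b) out_hist \<Rightarrow> ('p, 'b) out_hist"
    where causal: "causal T"
    and emulates: "\<And>truth inp out. EvAGE truth inp out \<Longrightarrow> AGE truth inp (T inp out)"
    unfolding weaker_def by blast
  fix p :: 'p and b :: 'b
  define inp :: "('p, 'b) in_hist" where "inp = (\<lambda>_ _ _. True)"
  have suffix: "input_suffix inp p b"
    unfolding input_suffix_def inp_def by simp
  define out_old :: "('p, 'b) out_hist" where "out_old = (\<lambda>_ _ _. Some Old)"
  have "AGE (\<lambda>_. Old) inp (T inp out_old)"
    by (rule emulates, rule EvAGE_eventually_constant[of 0]) (simp add: out_old_def)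
  then obtain k where k: "T inp out_old k p b = Some Old"
    using suffix unfolding AGE_def by blast
  define out_new :: "('p, 'b) out_hist" where
    "out_new = (\<lambda>i _ _. if i \<le> k then Some Old else Some New)"
  have age_new: "AGE (\<lambda>_. New) inp (T inp out_new)"
    by (rule emulates, rule EvAGE_eventually_constant[of "Suc k"]) (simp add: out_new_def)
  have "T inp out_new k = T inp out_old k"
    by (rule causal_eq_upto[OF causal]) (simp add: out_new_def out_old_def)
  with k have "T inp out_new k p b = Some Old"
    by simp
  from AGE_output_correct[OF age_new suffix this] show False
    by simp
qed

theorem lemma3:
  shows "strictly_weaker (EvAGE :: ('p, 'b) detector) AGE"
  unfolding strictly_weaker_def det_equiv_def
  using EvAGE_weaker_AGE AGE_not_weaker_EvAGE by blast

end
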